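(* Let $X,Y$ be compact metric spaces and let $\mathcal G\subset\mathrm{Homeo}(X)$, $\mathcal H\subset\mathrm{Homeo}(Y)$ be finitely generated pseudogroups strongly isomorphic via a homeomorphism $\varphi:X\to Y$; let $\mathcal G_1$ be a finite generating set of $\mathcal G$ and $\mathcal H_1=\{\varphi\circ g\circ\varphi^{-1}:g\in\mathcal G_1\}$. Then for every Borel probability measure $\mu$ on $X$ and every $x\in X$, $\underline{h}_\mu((\mathcal G,\mathcal G_1),x)=\underline{h}_{\varphi_*\mu}((\mathcal H,\mathcal H_1),\varphi(x))$.
   Context: $\mathrm{Homeo}(X)$: homeomorphisms $g:D_g\to R_g$ between open subsets of $X$, composed on natural domains $D_{h\circ g}=g^{-1}(D_h)$. A pseudogroup is a subset of $\mathrm{Homeo}(X)$ containing $\mathrm{id}_X$, closed under composition, inversion, restriction to open subsets, and gluing along open covers of the domain; $\Gamma$ generates $\mathcal G$ if $\bigcup_{g\in\Gamma}(D_g\cup R_g)=X$ and $\mathcal G$ is exactly the set of $g\in\mathrm{Homeo}(X)$ locally equal near each point of $D_g$ to a finite composition of elements of $\Gamma$ and their inverses. $\mathcal G,\mathcal H$ are strongly isomorphic via $\varphi$ if for every $f\in\mathrm{Homeo}(X)$: $\varphi\circ f\circ\varphi^{-1}\in\mathcal H$ iff $f\in\mathcal G$. For a pseudogroup with finite generating set $\Gamma$: $\Gamma_n=\{g_1\circ\cdots\circ g_n:g_i\in\Gamma\}$, $\Gamma_n^x=\{g\in\Gamma_n:x\in D_g\}$, $B_n(x,\varepsilon)=\{y: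 d(g(x),g(y))<\varepsilon\ \forall g\in\Gamma_n^x\cap\Gamma_n^y\}$, and the local lower measure entropy of a measure $\nu$ is $\underline{h}_\nu((\cdot,\Gamma),x)=\lim_{\varepsilon\to0}\liminf_{n\to\infty}-\frac1n\log\nu(B_n(x,\varepsilon))$. $\varphi_*\mu=\mu\circ\varphi^{-1}$. *)

theory Defs
  imports "HOL-Probability.Probability"
begin

text \<open>Elements of Homeo(X), for X the whole (compact metric) type, are partial maps
  g :: 'a \<rightharpoonup> 'a with open domain D_g = dom g and open range R_g = ran g,
  restricting to a homeomorphism D_g \<rightarrow> R_g.  Composition on natural domains is
  the map composition (map_comp h g), whose domain is g^{-1}(D_h).\<close>

definition phomeo :: "('a::topological_space \<rightharpoonup> 'a) \<Rightarrow> bool" where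
  "phomeo g \<longleftrightarrow> open (dom g) \<and> open (ran g) \<and>
     (\<exists>h. homeomorphism (dom g) (ran g) (\<lambda>x. the (g x)) h)"

definition pinv :: "('a \<rightharpoonup> 'a) \<Rightarrow> ('a \<rightharpoonup> 'a)" where
  "pinv g = (\<lambda>y. if y \<in> ran g then Some (THE x. g x = Some y) else None)"

definition pseudogroup :: "('a::topological_space \<rightharpoonup> 'a) set \<Rightarrow> bool" where
  "pseudogroup P \<longleftrightarrow>
     P \<subseteq> Collect phomeo \<and>
     Some \<in> P \<and>
     (\<forall>g\<in>P. \<forall>h\<in>P. h \<circ>\<^sub>m g \<in> P) \<and>
     (\<forall>g\<in>P. pinv g \<in> P) \<and>
     (\<forall>g\<in>P. \<forall>U. open U \<longrightarrow> g |` U \<in> P) \<and>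
     (\<forall>g. phomeo g \<longrightarrow>
        (\<forall>\<U>. (\<forall>U\<in>\<U>. open U) \<and> \<Union>\<U> = dom g \<and> (\<forall>U\<in>\<U>. g |` U \<in> P) \<longrightarrow> g \<in> P))"

inductive_set pwords :: "('a \<rightharpoonup> 'a) set \<Rightarrow> ('a \<rightharpoonup> 'a) set" for \<Gamma> where
  pw_id: "Some \<in> pwords \<Gamma>"
| pw_gen: "g \<in> \<Gamma> \<Longrightarrow> w \<in> pwords \<Gamma> \<Longrightarrow> g \<circ>\<^sub>m w \<in> pwords \<Gamma>"
| pw_inv: "g \<in> \<Gamma> \<Longrightarrow> w \<in> pwords \<Gamma> \<Longrightarrow> pinv g \<circ>\<^sub>m w \<in> pwords \<Gamma>"

definition generates :: "('a::topological_space \<rightharpoonup> 'a) set \<Rightarrow> ('a \<rightharpoonup> 'a) set \<Rightarrow> bool" where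
  "generates \<Gamma> P \<longleftrightarrow>
     \<Gamma> \<subseteq> Collect phomeo \<and>
     (\<Union>g\<in>\<Gamma>. dom g \<union> ran g) = UNIV \<and>
     P = {g. phomeo g \<and> (\<forall>x\<in>dom g. \<exists>U. open U \<and> x \<in> U \<and> U \<subseteq> dom g \<and>
                                   (\<exists>w\<in>pwords \<Gamma>. \<forall>y\<in>U. g y = w y))}"

definition finitely_generated :: "('a::topological_space \<rightharpoonup> 'a) set \<Rightarrow> bool" where
  "finitely_generated P \<longleftrightarrow> (\<exists>\<Gamma>. finite \<Gamma> \<and> generates \<Gamma> P)"

definition pconj :: "('a \<Rightarrow> 'b) \<Rightarrow> ('a \<rightharpoonup> 'a) \<Rightarrow> ('b \<rightharpoonup> 'b)" where
  "pconj \<phi> f = (\<lambda>y. map_option \<phi> (f (inv \<phi> y)))"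

definition strongly_isomorphic ::
  "('a::topological_space \<rightharpoonup> 'a) set \<Rightarrow> ('b::topological_space \<rightharpoonup> 'b) set \<Rightarrow> ('a \<Rightarrow> 'b) \<Rightarrow> bool" where
  "strongly_isomorphic G H \<phi> \<longleftrightarrow> (\<forall>f. phomeo f \<longrightarrow> (pconj \<phi> f \<in> H \<longleftrightarrow> f \<in> G))"

fun gamma_n :: "('a \<rightharpoonup> 'a) set \<Rightarrow> nat \<Rightarrow> ('a \<rightharpoonup> 'a) set" where
  "gamma_n \<Gamma> 0 = {Some}"
| "gamma_n \<Gamma> (Suc n) = {g \<circ>\<^sub>m h | g h. g \<in> \<Gamma> \<and> h \<in> gamma_n \<Gamma> n}"

definition bowen_ball :: "('a::metric_space \<rightharpoonup> 'a) set \<Rightarrow> nat \<Rightarrow> 'a \<Rightarrow> real \<Rightarrow> 'a set" where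
  "bowen_ball \<Gamma> n x \<epsilon> = {y. \<forall>g\<in>gamma_n \<Gamma> n. x \<in> dom g \<and> y \<in> dom g \<longrightarrow>
                                   dist (the (g x)) (the (g y)) < \<epsilon>}"

definition neglog :: "real \<Rightarrow> ereal" where
  "neglog p = (if p = 0 then \<infinity> else ereal (- ln p))"

definition lower_local_entropy :: "'a::metric_space measure \<Rightarrow> ('a \<rightharpoonup> 'a) set \<Rightarrow> 'a \<Rightarrow> ereal" where
  "lower_local_entropy \<nu> \<Gamma> x =
     Lim (at_right (0::real))
       (\<lambda>\<epsilon>. liminf (\<lambda>n. neglog (measure \<nu> (bowen_ball \<Gamma> n x \<epsilon>)) / ereal (real n)))"

end

theory Submission
  imports Defs
begin

(* Conjugation by \<phi> carries the compositions of length n of G1 to those of H1, so the Bowen ball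
   of \<phi>_*\<mu> at \<phi>(x) is the \<phi>-image of the Bowen ball at x taken with respect to the pulled-back
   metric d(\<phi> u, \<phi> v), and both have the same measure.  On compact spaces \<phi> and \<phi>^-1 are uniformly
   continuous, so every ball of one metric contains a ball of the other, uniformly in n.  The
   liminf is antitone in the radius, hence its limit at 0 is a supremum, and mutually cofinal
   families of radii give the same supremum. *)

definition pullback_bowen_ball ::
  "('a \<Rightarrow> 'b::metric_space) \<Rightarrow> ('a \<rightharpoonup> 'a) set \<Rightarrow> nat \<Rightarrow> 'a \<Rightarrow> real \<Rightarrow> 'a set" where
  "pullback_bowen_ball f \<Gamma> n x \<epsilon> = {y. \<forall>g\<in>gamma_n \<Gamma> n. x \<in> dom g \<and> y \<in> dom g \<longrightarrow>
     dist (f (the (g x))) (f (the (g y))) < \<epsilon>}"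

definition pullback_scale_entropy ::
  "'a measure \<Rightarrow> ('a \<Rightarrow> 'b::metric_space) \<Rightarrow> ('a \<rightharpoonup> 'a) set \<Rightarrow> 'a \<Rightarrow> real \<Rightarrow> ereal" where
  "pullback_scale_entropy \<nu> f \<Gamma> x \<epsilon> =
     liminf (\<lambda>n. neglog (measure \<nu> (pullback_bowen_ball f \<Gamma> n x \<epsilon>)) / ereal (real n))"

lemma lower_local_entropy_eq_pullback_id:
  "lower_local_entropy \<nu> \<Gamma> x = Lim (at_right 0) (pullback_scale_entropy \<nu> id \<Gamma> x)"
  unfolding lower_local_entropy_def pullback_scale_entropy_def pullback_bowen_ball_def bowen_ball_def
  by simp

lemma pullback_bowen_ball_mono:
  assumes "\<And>u v. dist (f u) (f v) < \<delta> \<Longrightarrow> dist (g u) (g v) < \<epsilon>"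
  shows "pullback_bowen_ball f \<Gamma> n x \<delta> \<subseteq> pullback_bowen_ball g \<Gamma> n x \<epsilon>"
  using assms unfolding pullback_bowen_ball_def by blast

lemma finite_gamma_n: "finite \<Gamma> \<Longrightarrow> finite (gamma_n \<Gamma> n)"
  by (induction n) (auto intro: finite_image_set2)

lemma gamma_n_open_continuous:
  assumes "\<Gamma> \<subseteq> Collect phomeo" "g \<in> gamma_n \<Gamma> n"
  shows "open (dom g) \<and> continuous_on (dom g) (\<lambda>y. the (g y))"
  using assms(2)
proof (induction n arbitrary: g)
  case 0
  then show ?case by (simp add: continuous_on_id)
next
  case (Suc n)
  then obtain g1 h where g: "g = g1 \<circ>\<^sub>m h" and g1: "g1 \<in> \<Gamma>" and h: "h \<in> gamma_n \<Gamma> n"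
    by auto
  have "phomeo g1" using g1 assms(1) by auto
  then have og1: "open (dom g1)" and cg1: "continuous_on (dom g1) (\<lambda>y. the (g1 y))"
    unfolding phomeo_def homeomorphism_def by auto
  from Suc.IH[OF h] have oh: "open (dom h)" and ch: "continuous_on (dom h) (\<lambda>y. the (h y))"
    by auto
  have dom_g: "dom g = (\<lambda>y. the (h y)) -` dom g1 \<inter> dom h"
    unfolding g by (auto simp: map_comp_def dom_def split: option.splits)
  have open_g: "open (dom g)"
    unfolding dom_g by (rule continuous_on_open_vimage[OF oh, THEN iffD1, rule_format, OF ch og1])
  have comp_cont: "continuous_on (dom g) (\<lambda>y. the (g1 (the (h y))))"
    unfolding dom_g by (rule continuous_on_compose2[OF cg1 continuous_on_subset[OF ch]]) auto
  have "continuous_on (dom g) (\<lambda>y. the (g y))"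
    by (rule continuous_on_cong[THEN iffD1, OF refl _ comp_cont])
       (auto simp: g map_comp_def split: option.splits)
  with open_g show ?case by simp
qed

lemma pullback_bowen_ball_borel:
  assumes "\<Gamma> \<subseteq> Collect phomeo" "finite \<Gamma>" "continuous_on UNIV f"
  shows "pullback_bowen_ball f \<Gamma> n x \<epsilon> \<in> sets borel"
proof -
  define A where "A g = {y. x \<in> dom g \<and> y \<in> dom g \<longrightarrow>
    dist (f (the (g x))) (f (the (g y))) < \<epsilon>}" for g
  have A_borel: "A g \<in> sets borel" if g: "g \<in> gamma_n \<Gamma> n" for g
  proof (cases "x \<in> dom g")
    case True
    from gamma_n_open_continuous[OF assms(1) g]
    have o: "open (dom g)" and c: "continuous_on (dom g) (\<lambda>y. f (the (g y)))"
      using continuous_on_compose2[OF assms(3)] by auto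
    have "open ((\<lambda>y. f (the (g y))) -` ball (f (the (g x))) \<epsilon> \<inter> dom g)"
      using continuous_on_open_vimage[OF o] c by blast
    moreover have "A g = - dom g \<union> ((\<lambda>y. f (the (g y))) -` ball (f (the (g x))) \<epsilon> \<inter> dom g)"
      unfolding A_def using True by (auto simp: ball_def)
    ultimately show ?thesis using o by auto
  next
    case False
    then show ?thesis unfolding A_def by simp
  qed
  have "(\<Inter>g\<in>gamma_n \<Gamma> n. A g) \<in> sets borel"
    using A_borel finite_gamma_n[OF assms(2)] by (intro sets.countable_INT'' countable_finite) auto
  moreover have "pullback_bowen_ball f \<Gamma> n x \<epsilon> = (\<Inter>g\<in>gamma_n \<Gamma> n. A g)"
    unfolding pullback_bowen_ball_def A_def by auto
  ultimately show ?thesis by simp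
qed

lemma neglog_antimono: "0 \<le> p \<Longrightarrow> p \<le> q \<Longrightarrow> neglog q \<le> neglog p"
  by (auto simp: neglog_def)

lemma liminf_neglog_measure_antimono:
  assumes "finite_measure M" "\<And>n. T n \<in> sets M" "\<And>n. S n \<subseteq> T n"
  shows "liminf (\<lambda>n. neglog (measure M (T n)) / ereal (real n))
       \<le> liminf (\<lambda>n. neglog (measure M (S n)) / ereal (real n))"
proof (intro Liminf_mono eventually_mono[OF eventually_gt_at_top[of 0]])
  fix n :: nat
  assume "0 < n"
  moreover have "neglog (measure M (T n)) \<le> neglog (measure M (S n))"
    by (intro neglog_antimono measure_nonneg finite_measure.finite_measure_mono assms)
  ultimately show "neglog (measure M (T n)) / ereal (real n) \<le> neglog (measure M (S n)) / ereal (real n)"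
    by (intro ereal_divide_right_mono) auto
qed

lemma pullback_scale_entropy_le:
  assumes "finite_measure \<nu>" "sets \<nu> = sets borel" "\<Gamma> \<subseteq> Collect phomeo" "finite \<Gamma>"
    and "continuous_on UNIV g"
    and "\<And>u v. dist (f u) (f v) < \<delta> \<Longrightarrow> dist (g u) (g v) < \<epsilon>"
  shows "pullback_scale_entropy \<nu> g \<Gamma> x \<epsilon> \<le> pullback_scale_entropy \<nu> f \<Gamma> x \<delta>"
  unfolding pullback_scale_entropy_def
  using pullback_bowen_ball_borel[OF assms(3-5)] assms(2)
  by (intro liminf_neglog_measure_antimono[OF assms(1)] pullback_bowen_ball_mono assms(6)) auto

lemma Lim_at_right_0_antitone_eq_SUP:
  fixes f :: "real \<Rightarrow> ereal"
  assumes "\<And>a b. 0 < a \<Longrightarrow> a \<le> b \<Longrightarrow> f b \<le> f a"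
  shows "Lim (at_right 0) f = (SUP \<epsilon>\<in>{0<..}. f \<epsilon>)"
proof (rule tendsto_Lim[OF trivial_limit_at_right_real], rule increasing_tendsto)
  show "\<forall>\<^sub>F \<epsilon> in at_right 0. f \<epsilon> \<le> (SUP \<epsilon>\<in>{0<..}. f \<epsilon>)"
    unfolding eventually_at_right_field by (intro exI[of _ 1]) (auto intro: SUP_upper)
next
  fix y assume "y < (SUP \<epsilon>\<in>{0<..}. f \<epsilon>)"
  then obtain e where "0 < e" "y < f e" by (auto simp: less_SUP_iff)
  then show "\<forall>\<^sub>F \<epsilon> in at_right 0. y < f \<epsilon>"
    unfolding eventually_at_right_field using assms
    by (intro exI[of _ e]) (auto intro: less_le_trans)
qed

lemma Lim_at_right_0_eq_if_cofinal:
  fixes f g :: "real \<Rightarrow> ereal"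
  assumes "\<And>a b. 0 < a \<Longrightarrow> a \<le> b \<Longrightarrow> f b \<le> f a"
    and "\<And>a b. 0 < a \<Longrightarrow> a \<le> b \<Longrightarrow> g b \<le> g a"
    and "\<And>\<epsilon>. 0 < \<epsilon> \<Longrightarrow> \<exists>\<delta>>0. f \<epsilon> \<le> g \<delta>"
    and "\<And>\<epsilon>. 0 < \<epsilon> \<Longrightarrow> \<exists>\<delta>>0. g \<epsilon> \<le> f \<delta>"
  shows "Lim (at_right 0) f = Lim (at_right 0) g"
proof -
  have "(SUP \<epsilon>\<in>{0<..}. f \<epsilon>) \<le> (SUP \<epsilon>\<in>{0<..}. g \<epsilon>)"
    using assms(3) by (auto intro!: SUP_least intro: SUP_upper2)
  moreover have "(SUP \<epsilon>\<in>{0<..}. g \<epsilon>) \<le> (SUP \<epsilon>\<in>{0<..}. f \<epsilon>)"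
    using assms(4) by (auto intro!: SUP_least intro: SUP_upper2)
  ultimately show ?thesis
    using Lim_at_right_0_antitone_eq_SUP[OF assms(1)] Lim_at_right_0_antitone_eq_SUP[OF assms(2)]
    by simp
qed

lemma Lim_pullback_scale_entropy_eq:
  assumes "finite_measure \<nu>" "sets \<nu> = sets borel" "\<Gamma> \<subseteq> Collect phomeo" "finite \<Gamma>"
    and "continuous_on UNIV f" "continuous_on UNIV g"
    and "\<And>\<epsilon>. 0 < \<epsilon> \<Longrightarrow> \<exists>\<delta>>0. \<forall>u v. dist (f u) (f v) < \<delta> \<longrightarrow> dist (g u) (g v) < \<epsilon>"
    and "\<And>\<epsilon>. 0 < \<epsilon> \<Longrightarrow> \<exists>\<delta>>0. \<forall>u v. dist (g u) (g v) < \<delta> \<longrightarrow> dist (f u) (f v) < \<epsilon>"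
  shows "Lim (at_right 0) (pullback_scale_entropy \<nu> f \<Gamma> x)
       = Lim (at_right 0) (pullback_scale_entropy \<nu> g \<Gamma> x)"
proof (rule Lim_at_right_0_eq_if_cofinal)
  fix a b :: real
  assume "0 < a" "a \<le> b"
  then show "pullback_scale_entropy \<nu> f \<Gamma> x b \<le> pullback_scale_entropy \<nu> f \<Gamma> x a"
    and "pullback_scale_entropy \<nu> g \<Gamma> x b \<le> pullback_scale_entropy \<nu> g \<Gamma> x a"
    by (auto intro: pullback_scale_entropy_le[OF assms(1-5)] pullback_scale_entropy_le[OF assms(1-4,6)])
next
  fix \<epsilon> :: real
  assume "0 < \<epsilon>"
  then obtain \<delta> where "0 < \<delta>" "\<And>u v. dist (g u) (g v) < \<delta> \<Longrightarrow> dist (f u) (f v) < \<epsilon>"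
    using assms(8) by blast
  then show "\<exists>\<delta>>0. pullback_scale_entropy \<nu> f \<Gamma> x \<epsilon> \<le> pullback_scale_entropy \<nu> g \<Gamma> x \<delta>"
    using pullback_scale_entropy_le[OF assms(1-5)] by blast
next
  fix \<epsilon> :: real
  assume "0 < \<epsilon>"
  then obtain \<delta> where "0 < \<delta>" "\<And>u v. dist (f u) (f v) < \<delta> \<Longrightarrow> dist (g u) (g v) < \<epsilon>"
    using assms(7) by blast
  then show "\<exists>\<delta>>0. pullback_scale_entropy \<nu> g \<Gamma> x \<epsilon> \<le> pullback_scale_entropy \<nu> f \<Gamma> x \<delta>"
    using pullback_scale_entropy_le[OF assms(1-4,6)] by blast
qed

lemma pconj_Some: "bij \<phi> \<Longrightarrow> pconj \<phi> Some = Some"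
  unfolding pconj_def by (simp add: bij_is_surj surj_f_inv_f)

lemma pconj_map_comp: "bij \<phi> \<Longrightarrow> pconj \<phi> (g \<circ>\<^sub>m h) = pconj \<phi> g \<circ>\<^sub>m pconj \<phi> h"
  unfolding pconj_def by (rule ext) (auto simp: map_comp_def bij_is_inj split: option.splits)

lemma gamma_n_pconj:
  assumes "bij \<phi>"
  shows "gamma_n (pconj \<phi> ` \<Gamma>) n = pconj \<phi> ` gamma_n \<Gamma> n"
proof (induction n)
  case 0
  then show ?case by (simp add: pconj_Some[OF assms])
next
  case (Suc n)
  have "gamma_n (pconj \<phi> ` \<Gamma>) (Suc n) = {pconj \<phi> (g \<circ>\<^sub>m h) | g h. g \<in> \<Gamma> \<and> h \<in> gamma_n \<Gamma> n}"
    by (auto simp: Suc.IH pconj_map_comp[OF assms])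
  then show ?case by auto
qed

lemma bowen_ball_pconj:
  assumes "bij \<phi>"
  shows "bowen_ball (pconj \<phi> ` \<Gamma>) n (\<phi> x) \<epsilon> = inv \<phi> -` pullback_bowen_ball \<phi> \<Gamma> n x \<epsilon>"
  unfolding bowen_ball_def pullback_bowen_ball_def gamma_n_pconj[OF assms]
  by (auto simp: pconj_def dom_def bij_is_inj[OF assms])

lemma measure_distr_bowen_ball_pconj:
  assumes "homeomorphism UNIV UNIV \<phi> \<psi>" "sets \<mu> = sets borel"
    and "\<Gamma> \<subseteq> Collect phomeo" "finite \<Gamma>"
  shows "measure (distr \<mu> borel \<phi>) (bowen_ball (pconj \<phi> ` \<Gamma>) n (\<phi> x) \<epsilon>)
       = measure \<mu> (pullback_bowen_ball \<phi> \<Gamma> n x \<epsilon>)"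
proof -
  have \<psi>\<phi>: "\<And>y. \<psi> (\<phi> y) = y" and \<phi>\<psi>: "\<And>y. \<phi> (\<psi> y) = y"
    and \<phi>_cont: "continuous_on UNIV \<phi>" and \<psi>_cont: "continuous_on UNIV \<psi>"
    using assms(1) unfolding homeomorphism_def by auto
  have \<phi>_meas: "\<phi> \<in> measurable \<mu> borel"
    using borel_measurable_continuous_onI[OF \<phi>_cont] measurable_cong_sets[OF assms(2) refl]
    by blast
  have \<psi>_meas: "\<psi> \<in> borel_measurable borel"
    using borel_measurable_continuous_onI[OF \<psi>_cont] .
  have B_borel: "pullback_bowen_ball \<phi> \<Gamma> n x \<epsilon> \<in> sets borel"
    using pullback_bowen_ball_borel[OF assms(3,4) \<phi>_cont] .
  have "bij \<phi>" and "inv \<phi> = \<psi>"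
    using \<psi>\<phi> \<phi>\<psi> by (metis bijI', rule inv_equality)
  then have "measure (distr \<mu> borel \<phi>) (bowen_ball (pconj \<phi> ` \<Gamma>) n (\<phi> x) \<epsilon>)
      = measure \<mu> (\<phi> -` \<psi> -` pullback_bowen_ball \<phi> \<Gamma> n x \<epsilon> \<inter> space \<mu>)"
    using measurable_sets[OF \<psi>_meas B_borel]
    by (simp add: bowen_ball_pconj measure_distr[OF \<phi>_meas])
  also have "\<phi> -` \<psi> -` pullback_bowen_ball \<phi> \<Gamma> n x \<epsilon> \<inter> space \<mu> = pullback_bowen_ball \<phi> \<Gamma> n x \<epsilon>"
    using \<psi>\<phi> sets_eq_imp_space_eq[OF assms(2)] by auto
  finally show ?thesis .
qed

lemma lower_local_entropy_distr_pconj: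
  assumes "homeomorphism UNIV UNIV \<phi> \<psi>" "sets \<mu> = sets borel"
    and "\<Gamma> \<subseteq> Collect phomeo" "finite \<Gamma>"
  shows "lower_local_entropy (distr \<mu> borel \<phi>) (pconj \<phi> ` \<Gamma>) (\<phi> x)
       = Lim (at_right 0) (pullback_scale_entropy \<mu> \<phi> \<Gamma> x)"
  unfolding lower_local_entropy_def pullback_scale_entropy_def
    measure_distr_bowen_ball_pconj[OF assms] ..

lemma compact_continuous_dist_uniform:
  fixes f :: "'a::metric_space \<Rightarrow> 'b::metric_space"
  assumes "compact (UNIV :: 'a set)" "continuous_on UNIV f" "0 < \<epsilon>"
  shows "\<exists>\<delta>>0. \<forall>u v. dist u v < \<delta> \<longrightarrow> dist (f u) (f v) < \<epsilon>"
  using compact_uniformly_continuous[OF assms(2,1)] assms(3)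
  unfolding uniformly_continuous_on_def by (metis UNIV_I dist_commute)

theorem mainTheorem14:
  fixes G :: "('a::metric_space \<rightharpoonup> 'a) set" and H :: "('b::metric_space \<rightharpoonup> 'b) set"
    and \<phi> :: "'a \<Rightarrow> 'b" and G1 :: "('a \<rightharpoonup> 'a) set"
    and \<mu> :: "'a measure" and x :: 'a
  assumes "compact (UNIV :: 'a set)" and "compact (UNIV :: 'b set)"
    and "pseudogroup G" and "pseudogroup H"
    and "finitely_generated G" and "finitely_generated H"
    and "\<exists>\<psi>. homeomorphism UNIV UNIV \<phi> \<psi>"
    and "strongly_isomorphic G H \<phi>"
    and "finite G1" and "generates G1 G"
    and "prob_space \<mu>" and "sets \<mu> = sets borel"
  shows "lower_local_entropy \<mu> G1 x =
         lower_local_entropy (distr \<mu> borel \<phi>) (pconj \<phi> ` G1) (\<phi> x)"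
proof -
  obtain \<psi> where hom: "homeomorphism UNIV UNIV \<phi> \<psi>" using assms(7) by auto
  then have \<psi>\<phi>: "\<And>y. \<psi> (\<phi> y) = y" and \<phi>_cont: "continuous_on UNIV \<phi>"
    and \<psi>_cont: "continuous_on UNIV \<psi>"
    unfolding homeomorphism_def by auto
  have G1_phomeo: "G1 \<subseteq> Collect phomeo" using assms(10) unfolding generates_def by auto
  have "finite_measure \<mu>" using assms(11) unfolding prob_space_def by auto
  have \<phi>_unif: "\<exists>\<delta>>0. \<forall>u v. dist (id u) (id v) < \<delta> \<longrightarrow> dist (\<phi> u) (\<phi> v) < \<epsilon>" if "0 < \<epsilon>" for \<epsilon>
    using compact_continuous_dist_uniform[OF assms(1) \<phi>_cont that] by simp
  have \<psi>_unif: "\<exists>\<delta>>0. \<forall>u v. dist (\<phi> u) (\<phi> v) < \<delta> \<longrightarrow> dist (id u) (id v) < \<epsilon>" if "0 < \<epsilon>" for \<epsilon>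
    using compact_continuous_dist_uniform[OF assms(2) \<psi>_cont that] \<psi>\<phi> by (metis id_apply)
  have "lower_local_entropy \<mu> G1 x = Lim (at_right 0) (pullback_scale_entropy \<mu> id G1 x)"
    by (rule lower_local_entropy_eq_pullback_id)
  also have "\<dots> = Lim (at_right 0) (pullback_scale_entropy \<mu> \<phi> G1 x)"
    by (rule Lim_pullback_scale_entropy_eq[OF \<open>finite_measure \<mu>\<close> assms(12) G1_phomeo assms(9)
          continuous_on_id' \<phi>_cont \<phi>_unif \<psi>_unif])
  also have "\<dots> = lower_local_entropy (distr \<mu> borel \<phi>) (pconj \<phi> ` G1) (\<phi> x)"
    by (rule lower_local_entropy_distr_pconj[OF hom assms(12) G1_phomeo assms(9), symmetric])
  finally show ?thesis .
qed

end
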